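(* Let $\lambda\in ba(\mathcal A)$, $\mathscr M\subset ba(\mathcal A,\lambda)$, and let $\mathscr H_0\subset\mathcal A$ generate the ring $\mathscr H$. There exist $H_1,H_2,\ldots\in\mathscr H_0$ such that, with $G_n=H_n\setminus\bigcup_{k<n}H_k$ and $G=\bigcap_nH_n^c$, $$|\mu|^*(H\cap G)=0\quad\text{and}\quad\mu(A\cap H)=\sum_n\mu(A\cap H\cap G_n)\qquad\mu\in\mathscr M,\ A\in\mathcal A,\ H\in\mathscr H.$$ Moreover: (i) if $\mu\in\mathscr M$ is $\mathscr H_0$-inner regular, then $\mu(A)=\sum_n\mu(A\cap G_n)$ for all $A\in\mathcal A$; (ii) if $\mathscr H_0$ is closed under countable unions, then $\mu(A)=\mu(A\cap G)+\sum_n\mu(A\cap G_n)$ for all $\mu\in\mathscr M$, $A\in\mathcal A$.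
   Context: $\mathcal A$ algebra of subsets of $\Omega$; $ba(\mathcal A)$ bounded finitely additive real set functions, $|\mu|$ total variation, $\mu^+,\mu^-$ positive and negative parts. $ba(\mathcal A,\lambda)=\{\mu:\mu\ll\lambda\}$, where $\mu\ll\lambda$ means for every $\varepsilon>0$ there is $\delta>0$ with $|\lambda|(A)<\delta\Rightarrow|\mu|(A)<\varepsilon$. $|\mu|^*(E)=\inf\{|\mu|(A):A\in\mathcal A,\ E\subset A\}$ is the outer measure for $E\subset\Omega$. $\mu$ is $\mathscr H_0$-inner regular if $\mu^+(A)=\sup\{\mu(H):H\in\mathscr H_0,\ H\subset A\}$ and $\mu^-(A)=\sup\{-\mu(H):H\in\mathscr H_0,\ H\subset A\}$ for all $A\in\mathcal A$. *)

theory Defs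
  imports "HOL-Analysis.Analysis"
begin

definition ba :: "'a set set \<Rightarrow> ('a set \<Rightarrow> real) set" where
  "ba AA = {\<mu>. (\<forall>B\<in>AA. \<forall>C\<in>AA. B \<inter> C = {} \<longrightarrow> \<mu> (B \<union> C) = \<mu> B + \<mu> C)
              \<and> (\<exists>c. \<forall>B\<in>AA. \<bar>\<mu> B\<bar> \<le> c)}"

definition tv :: "'a set set \<Rightarrow> ('a set \<Rightarrow> real) \<Rightarrow> 'a set \<Rightarrow> real" where
  "tv AA \<mu> A = Sup {(\<Sum>B\<in>P. \<bar>\<mu> B\<bar>) | P. finite P \<and> P \<subseteq> AA \<and> disjoint P \<and> \<Union>P = A}"

definition pos_part :: "'a set set \<Rightarrow> ('a set \<Rightarrow> real) \<Rightarrow> 'a set \<Rightarrow> real" where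
  "pos_part AA \<mu> A = Sup {\<mu> B | B. B \<in> AA \<and> B \<subseteq> A}"

definition neg_part :: "'a set set \<Rightarrow> ('a set \<Rightarrow> real) \<Rightarrow> 'a set \<Rightarrow> real" where
  "neg_part AA \<mu> A = Sup {- \<mu> B | B. B \<in> AA \<and> B \<subseteq> A}"

definition abs_cont :: "'a set set \<Rightarrow> ('a set \<Rightarrow> real) \<Rightarrow> ('a set \<Rightarrow> real) \<Rightarrow> bool" where
  "abs_cont AA \<mu> lam \<longleftrightarrow> (\<forall>\<epsilon>>0. \<exists>\<delta>>0. \<forall>A\<in>AA. tv AA lam A < \<delta> \<longrightarrow> tv AA \<mu> A < \<epsilon>)"

definition ba_ac :: "'a set set \<Rightarrow> ('a set \<Rightarrow> real) \<Rightarrow> ('a set \<Rightarrow> real) set" where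
  "ba_ac AA lam = {\<mu> \<in> ba AA. abs_cont AA \<mu> lam}"

definition outer_tv :: "'a set set \<Rightarrow> ('a set \<Rightarrow> real) \<Rightarrow> 'a set \<Rightarrow> real" where
  "outer_tv AA \<mu> E = Inf {tv AA \<mu> A | A. A \<in> AA \<and> E \<subseteq> A}"

definition inner_regular :: "'a set set \<Rightarrow> 'a set set \<Rightarrow> ('a set \<Rightarrow> real) \<Rightarrow> bool" where
  "inner_regular AA H0 \<mu> \<longleftrightarrow>
     (\<forall>A\<in>AA. ereal (pos_part AA \<mu> A) = (SUP H\<in>{H\<in>H0. H \<subseteq> A}. ereal (\<mu> H))
           \<and> ereal (neg_part AA \<mu> A) = (SUP H\<in>{H\<in>H0. H \<subseteq> A}. ereal (- \<mu> H)))"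

definition gen_ring :: "'a set \<Rightarrow> 'a set set \<Rightarrow> 'a set set" where
  "gen_ring \<Omega> H0 = \<Inter>{R. ring_of_sets \<Omega> R \<and> H0 \<subseteq> R}"

end

theory Submission
  imports Defs
begin

(* Idea: among finite unions of H0-sets, the total variation |lam| has a finite
   supremum s.  Choose finite families F_m \<subseteq> H0 whose unions come within 1/(m+1)
   of s and enumerate all their members as one sequence H_1, H_2, ...  By
   superadditivity of |lam|, for every finite F \<subseteq> H0 the part of \<Union>F not
   covered by H_1, ..., H_n has |lam|-variation at most s - |lam|(\<Union>F_m) once
   F_m \<subseteq> {H_1, ..., H_n}; hence it tends to 0 uniformly in F (the sequence is
   "exhausting").  Absolute continuity transfers this property from lam to every
   mu \<ll> lam.  Finally, mu(E) = \<Sum>_{k<n} mu(E \<inter> G_k) + mu(E - (H_1 \<union> ... \<union> H_n)),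
   so the series decomposition holds exactly when this remainder vanishes, which
   we show for sets covered by finitely many H0-sets (this includes the ring
   generated by H0), for inner regular mu, and when H0 is closed under countable
   unions. *)

lemma Sup_add_le:
  fixes X Y :: "real set"
  assumes "X \<noteq> {}" and "Y \<noteq> {}" and "\<And>x y. x \<in> X \<Longrightarrow> y \<in> Y \<Longrightarrow> x + y \<le> t"
  shows "Sup X + Sup Y \<le> t"
proof -
  have "Sup X \<le> t - y" if "y \<in> Y" for y
    using assms(1,3) that by (intro cSup_least) (auto simp: algebra_simps)
  then have "Sup Y \<le> t - Sup X"
    using assms(2) by (intro cSup_least) (auto simp: algebra_simps)
  then show ?thesis by simp
qed

lemma ba_additive:
  "\<mu> \<in> ba M \<Longrightarrow> B \<in> M \<Longrightarrow> C \<in> M \<Longrightarrow> B \<inter> C = {} \<Longrightarrow> \<mu> (B \<union> C) = \<mu> B + \<mu> C"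
  unfolding ba_def by auto

lemma ba_empty: "\<mu> \<in> ba M \<Longrightarrow> {} \<in> M \<Longrightarrow> \<mu> {} = 0"
  using ba_additive[of \<mu> M "{}" "{}"] by auto

lemma ba_bounded: "\<mu> \<in> ba M \<Longrightarrow> \<exists>c. \<forall>B\<in>M. \<bar>\<mu> B\<bar> \<le> c"
  unfolding ba_def by auto

definition variation_sums :: "'a set set \<Rightarrow> ('a set \<Rightarrow> real) \<Rightarrow> 'a set \<Rightarrow> real set" where
  "variation_sums M \<mu> A =
     {(\<Sum>B\<in>P. \<bar>\<mu> B\<bar>) | P. finite P \<and> P \<subseteq> M \<and> disjoint P \<and> \<Union>P = A}"

lemma tv_eq_Sup_variation_sums: "tv M \<mu> A = Sup (variation_sums M \<mu> A)"
  unfolding tv_def variation_sums_def by simp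

lemma abs_in_variation_sums: "A \<in> M \<Longrightarrow> \<bar>\<mu> A\<bar> \<in> variation_sums M \<mu> A"
  unfolding variation_sums_def by (intro CollectI exI[of _ "{A}"]) simp

context algebra
begin

lemma ba_finitely_additive:
  assumes "\<mu> \<in> ba M"
  shows "finite P \<Longrightarrow> P \<subseteq> M \<Longrightarrow> disjoint P \<Longrightarrow> \<mu> (\<Union>P) = (\<Sum>B\<in>P. \<mu> B)"
proof (induction P rule: finite_induct)
  case empty
  then show ?case using ba_empty[OF assms] by simp
next
  case (insert X P)
  have "X \<inter> \<Union>P = {}"
    using insert.prems(2) insert.hyps(2) unfolding pairwise_insert disjnt_def by blast
  moreover have "\<Union>P \<in> M" using insert.prems(1) insert.hyps(1) by (intro finite_Union) auto
  ultimately have "\<mu> (\<Union>(insert X P)) = \<mu> X + \<mu> (\<Union>P)"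
    using ba_additive[OF assms] insert.prems(1) by simp
  then show ?case
    using insert by (simp add: pairwise_insert)
qed

text \<open>The variation sums of a bounded additive function are bounded by twice its bound:
  split a partition into the pieces of positive and of negative measure.\<close>
lemma variation_sums_bounded:
  assumes "\<mu> \<in> ba M"
  obtains c where "\<And>A x. x \<in> variation_sums M \<mu> A \<Longrightarrow> x \<le> c"
proof -
  obtain c where c: "\<forall>B\<in>M. \<bar>\<mu> B\<bar> \<le> c" using ba_bounded[OF assms] by blast
  have "(\<Sum>B\<in>P. \<bar>\<mu> B\<bar>) \<le> 2 * c" if P: "finite P" "P \<subseteq> M" "disjoint P" for P
  proof -
    define Pp where "Pp = {B\<in>P. 0 \<le> \<mu> B}"
    define Pn where "Pn = {B\<in>P. \<mu> B < 0}"
    have parts: "finite Q" "Q \<subseteq> M" "disjoint Q" "\<Union>Q \<in> M" if "Q \<subseteq> P" for Q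
    proof -
      show "finite Q" "Q \<subseteq> M" "disjoint Q"
        using P that by (auto intro: finite_subset pairwise_subset)
      then show "\<Union>Q \<in> M" by (intro finite_Union) auto
    qed
    have "P = Pp \<union> Pn" "Pp \<inter> Pn = {}" unfolding Pp_def Pn_def by auto
    then have "(\<Sum>B\<in>P. \<bar>\<mu> B\<bar>) = (\<Sum>B\<in>Pp. \<bar>\<mu> B\<bar>) + (\<Sum>B\<in>Pn. \<bar>\<mu> B\<bar>)"
      using P(1) by (metis finite_Un sum.union_disjoint)
    also have "\<dots> = (\<Sum>B\<in>Pp. \<mu> B) + (\<Sum>B\<in>Pn. - \<mu> B)"
      by (intro arg_cong2[where f="(+)"] sum.cong) (auto simp: Pp_def Pn_def)
    also have "\<dots> = \<mu> (\<Union>Pp) - \<mu> (\<Union>Pn)"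
      using ba_finitely_additive[OF assms] parts[of Pp] parts[of Pn]
      by (simp add: sum_negf Pp_def Pn_def)
    also have "\<dots> \<le> 2 * c"
      using c parts(4)[of Pp] parts(4)[of Pn] unfolding Pp_def Pn_def abs_le_iff
      by (smt (verit) mem_Collect_eq subsetI)
    finally show ?thesis .
  qed
  then show thesis
    by (intro that[of "2 * c"]) (auto simp: variation_sums_def)
qed

lemma variation_sums_bdd_above: "\<mu> \<in> ba M \<Longrightarrow> bdd_above (variation_sums M \<mu> A)"
  by (metis bdd_above.I variation_sums_bounded)

lemma tv_ge_abs: "\<mu> \<in> ba M \<Longrightarrow> A \<in> M \<Longrightarrow> \<bar>\<mu> A\<bar> \<le> tv M \<mu> A"
  unfolding tv_eq_Sup_variation_sums
  by (rule cSup_upper[OF abs_in_variation_sums variation_sums_bdd_above])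

lemma tv_nonneg: "\<mu> \<in> ba M \<Longrightarrow> A \<in> M \<Longrightarrow> 0 \<le> tv M \<mu> A"
  using tv_ge_abs[of \<mu> A] by linarith

lemma tv_bounded:
  assumes "\<mu> \<in> ba M"
  obtains c where "\<And>A. A \<in> M \<Longrightarrow> tv M \<mu> A \<le> c"
proof -
  obtain c where "\<And>A x. x \<in> variation_sums M \<mu> A \<Longrightarrow> x \<le> c"
    using variation_sums_bounded[OF assms] by blast
  then show thesis
    by (intro that[of c]) (auto simp: tv_eq_Sup_variation_sums
        intro!: cSup_least dest: abs_in_variation_sums[of _ M \<mu>])
qed

text \<open>Partitions of disjoint sets combine to a partition of the union,
  so the total variation is superadditive.\<close>
lemma tv_superadditive:
  assumes mu: "\<mu> \<in> ba M" and "B \<in> M" "C \<in> M" and BC: "B \<inter> C = {}"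
  shows "tv M \<mu> B + tv M \<mu> C \<le> tv M \<mu> (B \<union> C)"
  unfolding tv_eq_Sup_variation_sums[of M \<mu> B] tv_eq_Sup_variation_sums[of M \<mu> C]
proof (rule Sup_add_le)
  show "variation_sums M \<mu> B \<noteq> {}" "variation_sums M \<mu> C \<noteq> {}"
    using abs_in_variation_sums assms(2,3) by blast+
  fix x y assume "x \<in> variation_sums M \<mu> B" "y \<in> variation_sums M \<mu> C"
  then obtain P Q where P: "x = (\<Sum>X\<in>P. \<bar>\<mu> X\<bar>)" "finite P" "P \<subseteq> M" "disjoint P" "\<Union>P = B"
    and Q: "y = (\<Sum>X\<in>Q. \<bar>\<mu> X\<bar>)" "finite Q" "Q \<subseteq> M" "disjoint Q" "\<Union>Q = C"
    unfolding variation_sums_def by blast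
  have "P \<inter> Q \<subseteq> {{}}" using P(5) Q(5) BC by blast
  then have "(\<Sum>X\<in>P \<inter> Q. \<bar>\<mu> X\<bar>) = 0"
    using ba_empty[OF mu] by (intro sum.neutral) auto
  then have "x + y = (\<Sum>X\<in>P \<union> Q. \<bar>\<mu> X\<bar>)"
    using P Q by (simp add: sum_Un)
  also have "\<dots> \<in> variation_sums M \<mu> (B \<union> C)"
    unfolding variation_sums_def using P Q BC
    by (intro CollectI exI[of _ "P \<union> Q"]) (auto intro: disjoint_union)
  then have "(\<Sum>X\<in>P \<union> Q. \<bar>\<mu> X\<bar>) \<le> tv M \<mu> (B \<union> C)"
    unfolding tv_eq_Sup_variation_sums by (rule cSup_upper[OF _ variation_sums_bdd_above[OF mu]])
  finally show "x + y \<le> tv M \<mu> (B \<union> C)" .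
qed

lemma tv_mono:
  assumes "\<mu> \<in> ba M" and "D \<in> M" "E \<in> M" and "D \<subseteq> E"
  shows "tv M \<mu> D \<le> tv M \<mu> E"
proof -
  have "tv M \<mu> D + tv M \<mu> (E - D) \<le> tv M \<mu> (D \<union> (E - D))"
    using assms(1-3) by (intro tv_superadditive) auto
  also have "D \<union> (E - D) = E" using assms(4) by blast
  finally show ?thesis using tv_nonneg[OF assms(1) Diff[OF assms(3,2)]] by linarith
qed

end

text \<open>Each set of the ring generated by \<open>H0 \<subseteq> AA\<close> lies in \<open>AA\<close> and is covered
  by finitely many members of \<open>H0\<close>: such sets already form a ring containing \<open>H0\<close>.\<close>
lemma gen_ring_finitely_covered:
  assumes "algebra \<Omega> AA" and "H0 \<subseteq> AA" and "H \<in> gen_ring \<Omega> H0"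
  shows "H \<in> AA" and "\<exists>F. finite F \<and> F \<subseteq> H0 \<and> H \<subseteq> \<Union>F"
proof -
  interpret algebra \<Omega> AA by fact
  define R where "R = {B\<in>AA. \<exists>F. finite F \<and> F \<subseteq> H0 \<and> B \<subseteq> \<Union>F}"
  have "ring_of_sets \<Omega> R"
  proof (rule ring_of_setsI)
    show "R \<subseteq> Pow \<Omega>" "{} \<in> R" unfolding R_def using space_closed by auto
    fix a b assume "a \<in> R" "b \<in> R"
    then obtain Fa Fb where "a \<in> AA" "finite Fa" "Fa \<subseteq> H0" "a \<subseteq> \<Union>Fa"
        and "b \<in> AA" "finite Fb" "Fb \<subseteq> H0" "b \<subseteq> \<Union>Fb"
      unfolding R_def by blast
    then show "a \<union> b \<in> R" "a - b \<in> R"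
      unfolding R_def
      by (intro CollectI conjI exI[of _ "Fa \<union> Fb"] exI[of _ Fa]; auto)+
  qed
  moreover have "H0 \<subseteq> R"
  proof
    fix h assume "h \<in> H0"
    then show "h \<in> R"
      unfolding R_def using assms(2) by (intro CollectI conjI exI[of _ "{h}"]) auto
  qed
  ultimately have "gen_ring \<Omega> H0 \<subseteq> R" unfolding gen_ring_def by blast
  then show "H \<in> AA" "\<exists>F. finite F \<and> F \<subseteq> H0 \<and> H \<subseteq> \<Union>F"
    using assms(3) unfolding R_def by blast+
qed

definition exhausting :: "'a set set \<Rightarrow> ('a set \<Rightarrow> real) \<Rightarrow> 'a set set \<Rightarrow> (nat \<Rightarrow> 'a set) \<Rightarrow> bool"
  where "exhausting AA \<mu> H0 Hs \<longleftrightarrow>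
    (\<forall>\<epsilon>>0. \<exists>N. \<forall>n\<ge>N. \<forall>F. finite F \<and> F \<subseteq> H0 \<longrightarrow> tv AA \<mu> (\<Union>F - (\<Union>k<n. Hs k)) < \<epsilon>)"

lemma enumeration_covering_finite_families:
  fixes Fs :: "nat \<Rightarrow> 'a set"
  assumes "\<And>m. finite (Fs m)" and "\<And>m. Fs m \<subseteq> H0" and "H0 \<noteq> {}"
  shows "\<exists>Hs :: nat \<Rightarrow> 'a. range Hs \<subseteq> H0 \<and> (\<forall>m. \<exists>N. Fs m \<subseteq> Hs ` {..<N})"
proof -
  obtain h where h: "h \<in> H0" using assms(3) by blast
  define W where "W = insert h (\<Union>m. Fs m)"
  have "countable (\<Union>m. Fs m)"
    by (rule countable_UN[OF countableI_type]) (simp add: assms(1) countable_finite)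
  then have "countable W" unfolding W_def by simp
  then have W: "range (from_nat_into W) = W" unfolding W_def by simp
  have "\<exists>N. Fs m \<subseteq> from_nat_into W ` {..<N}" for m
  proof -
    have "Fs m \<subseteq> from_nat_into W ` UNIV" using W unfolding W_def by blast
    then obtain C where "finite C" "Fs m = from_nat_into W ` C"
      using finite_subset_image[OF assms(1)] by metis
    moreover obtain N where "C \<subseteq> {..<N}" using \<open>finite C\<close> finite_nat_bounded by blast
    ultimately show ?thesis by (auto intro!: exI[of _ N])
  qed
  moreover have "W \<subseteq> H0" unfolding W_def using h assms(2) by blast
  then have "range (from_nat_into W) \<subseteq> H0" using W by simp
  ultimately show ?thesis by (intro exI[of _ "from_nat_into W"]) simp
qed

text \<open>Key estimate: if \<open>s\<close> bounds \<open>|lam|\<close> on finite unions of \<open>H0\<close>-sets and the first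
  \<open>n\<close> terms cover \<open>\<Union>F0\<close>, then what they leave of any \<open>\<Union>F\<close> has variation at most
  \<open>s - |lam|(\<Union>F0)\<close>, by superadditivity applied to \<open>(\<Union>F - U) \<union> U\<close>.\<close>
lemma (in algebra) tv_tail_estimate:
  fixes Hs :: "nat \<Rightarrow> 'a set"
  assumes lam: "lam \<in> ba M" and "H0 \<subseteq> M" and Hs: "range Hs \<subseteq> H0"
    and s: "\<And>F. finite F \<Longrightarrow> F \<subseteq> H0 \<Longrightarrow> tv M lam (\<Union>F) \<le> s"
    and F0: "finite F0" "F0 \<subseteq> H0" "\<Union>F0 \<subseteq> (\<Union>k<n. Hs k)"
    and F: "finite F" "F \<subseteq> H0"
  shows "tv M lam (\<Union>F - (\<Union>k<n. Hs k)) \<le> s - tv M lam (\<Union>F0)"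
proof -
  let ?U = "\<Union>k<n. Hs k"
  have U: "?U \<in> M" using assms(2) Hs by (intro finite_UN) auto
  have FM: "\<Union>F \<in> M" "\<Union>F0 \<in> M" using assms(2) F F0 by (auto intro!: finite_Union)
  have "tv M lam (\<Union>F0) \<le> tv M lam ?U"
    using tv_mono[OF lam FM(2) U F0(3)] .
  moreover have "tv M lam (\<Union>F - ?U) + tv M lam ?U \<le> tv M lam ((\<Union>F - ?U) \<union> ?U)"
    using U FM by (intro tv_superadditive[OF lam]) auto
  also have "(\<Union>F - ?U) \<union> ?U = \<Union>(F \<union> Hs ` {..<n})" by auto
  also have "tv M lam (\<Union>(F \<union> Hs ` {..<n})) \<le> s"
    using F Hs by (intro s) auto
  ultimately show ?thesis by linarith
qed

text \<open>Existence of an exhausting sequence: enumerate families that approximate the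
  supremum of \<open>|lam|\<close> over finite unions of \<open>H0\<close>-sets.\<close>
lemma exhausting_sequence_exists:
  assumes "algebra \<Omega> AA" and lam: "lam \<in> ba AA" and "H0 \<subseteq> AA" and "H0 \<noteq> {}"
  obtains Hs :: "nat \<Rightarrow> 'a set" where "range Hs \<subseteq> H0" and "exhausting AA lam H0 Hs"
proof -
  interpret algebra \<Omega> AA by fact
  define S where "S = {tv AA lam (\<Union>F) | F. finite F \<and> F \<subseteq> H0}"
  obtain c where "\<And>A. A \<in> AA \<Longrightarrow> tv AA lam A \<le> c" using tv_bounded[OF lam] by blast
  then have "bdd_above S" unfolding S_def using assms(3)
    by (intro bdd_aboveI[of _ c]) (auto intro!: finite_Union)
  have s: "tv AA lam (\<Union>F) \<le> Sup S" if "finite F" "F \<subseteq> H0" for F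
    using that by (intro cSup_upper[OF _ \<open>bdd_above S\<close>]) (auto simp: S_def)
  have "\<exists>F. finite F \<and> F \<subseteq> H0 \<and> Sup S - 1 / Suc m < tv AA lam (\<Union>F)" for m :: nat
  proof -
    have "tv AA lam (\<Union>{}) \<in> S" unfolding S_def by (intro CollectI exI[of _ "{}"]) simp
    then have "S \<noteq> {}" by blast
    then obtain x where "x \<in> S" "Sup S - 1 / Suc m < x"
      using less_cSupE[of "Sup S - 1 / Suc m" S] by auto
    then show ?thesis unfolding S_def by auto
  qed
  then obtain Fs where Fs: "\<And>m. finite (Fs m) \<and> Fs m \<subseteq> H0 \<and> Sup S - 1 / Suc m < tv AA lam (\<Union>(Fs m))"
    by metis
  have fin: "\<And>m. finite (Fs m)" and sub: "\<And>m. Fs m \<subseteq> H0" using Fs by auto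
  obtain Hs :: "nat \<Rightarrow> 'a set" where Hs: "range Hs \<subseteq> H0" and cover: "\<forall>m. \<exists>N. Fs m \<subseteq> Hs ` {..<N}"
    using enumeration_covering_finite_families[of Fs H0, OF fin sub assms(4)] by auto
  have "exhausting AA lam H0 Hs"
    unfolding exhausting_def
  proof (intro allI impI)
    fix \<epsilon> :: real assume "\<epsilon> > 0"
    then obtain m :: nat where m: "1 / Suc m < \<epsilon>"
      by (metis nat_approx_posE)
    obtain N where N: "Fs m \<subseteq> Hs ` {..<N}" using cover by blast
    have "tv AA lam (\<Union>F - (\<Union>k<n. Hs k)) < \<epsilon>"
      if "N \<le> n" "finite F" "F \<subseteq> H0" for n F
    proof -
      have "\<Union>(Fs m) \<subseteq> (\<Union>k<n. Hs k)" using N \<open>N \<le> n\<close> by fastforce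
      then have "tv AA lam (\<Union>F - (\<Union>k<n. Hs k)) \<le> Sup S - tv AA lam (\<Union>(Fs m))"
        using Fs that(2,3) by (intro tv_tail_estimate[OF lam assms(3) Hs s]) auto
      then show ?thesis using Fs[of m] m by linarith
    qed
    then show "\<exists>N. \<forall>n\<ge>N. \<forall>F. finite F \<and> F \<subseteq> H0 \<longrightarrow> tv AA lam (\<Union>F - (\<Union>k<n. Hs k)) < \<epsilon>"
      by blast
  qed
  with Hs show thesis by (rule that)
qed

lemma exhausting_abs_cont:
  assumes "algebra \<Omega> AA" and "H0 \<subseteq> AA" and "range Hs \<subseteq> AA"
    and lam: "exhausting AA lam H0 Hs" and ac: "abs_cont AA \<mu> lam"
  shows "exhausting AA \<mu> H0 Hs"
  unfolding exhausting_def
proof (intro allI impI)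
  interpret algebra \<Omega> AA by fact
  fix \<epsilon> :: real assume "\<epsilon> > 0"
  then obtain \<delta> where "\<delta> > 0" and \<delta>: "\<And>A. A \<in> AA \<Longrightarrow> tv AA lam A < \<delta> \<Longrightarrow> tv AA \<mu> A < \<epsilon>"
    using ac unfolding abs_cont_def by blast
  then obtain N where N: "\<And>n F. n \<ge> N \<Longrightarrow> finite F \<Longrightarrow> F \<subseteq> H0 \<Longrightarrow>
      tv AA lam (\<Union>F - (\<Union>k<n. Hs k)) < \<delta>"
    using lam unfolding exhausting_def by meson
  have "\<Union>F - (\<Union>k<n. Hs k) \<in> AA" if "finite F" "F \<subseteq> H0" for F n
    using that assms(2,3) by (intro Diff finite_Union finite_UN) auto
  with N \<delta> show "\<exists>N. \<forall>n\<ge>N. \<forall>F. finite F \<and> F \<subseteq> H0 \<longrightarrow> tv AA \<mu> (\<Union>F - (\<Union>k<n. Hs k)) < \<epsilon>"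
    by blast
qed

lemma inner_regular_abs_le:
  assumes mu: "\<mu> \<in> ba AA" and ir: "inner_regular AA H0 \<mu>" and D: "D \<in> AA"
    and bound: "\<And>H. H \<in> H0 \<Longrightarrow> H \<subseteq> D \<Longrightarrow> \<bar>\<mu> H\<bar> \<le> r"
  shows "\<bar>\<mu> D\<bar> \<le> r"
proof -
  obtain c where c: "\<forall>B\<in>AA. \<bar>\<mu> B\<bar> \<le> c" using ba_bounded[OF mu] by blast
  have "\<mu> D \<le> pos_part AA \<mu> D" "- \<mu> D \<le> neg_part AA \<mu> D"
    unfolding pos_part_def neg_part_def using D c
    by (auto intro!: cSup_upper simp: bdd_above_def abs_le_iff)
  moreover have "ereal (pos_part AA \<mu> D) \<le> ereal r" "ereal (neg_part AA \<mu> D) \<le> ereal r"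
    using ir D bound unfolding inner_regular_def by (auto intro!: SUP_least simp: abs_le_iff)
  ultimately show ?thesis by (simp add: abs_le_iff)
qed

context algebra
begin

lemma ba_telescoping:
  fixes Hs :: "nat \<Rightarrow> 'a set"
  assumes mu: "\<mu> \<in> ba M" and Hs: "range Hs \<subseteq> M" and E: "E \<in> M"
  shows "\<mu> E = (\<Sum>k<n. \<mu> (E \<inter> (Hs k - (\<Union>j<k. Hs j)))) + \<mu> (E - (\<Union>k<n. Hs k))"
proof (induction n)
  case 0
  then show ?case by simp
next
  case (Suc n)
  let ?U = "\<Union>k<n. Hs k"
  have split: "E - ?U = (E \<inter> (Hs n - ?U)) \<union> (E - (\<Union>k<Suc n. Hs k))"
    by (auto simp: lessThan_Suc)
  have "(\<Union>k<m. Hs k) \<in> M" for m using Hs by (intro finite_UN) auto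
  then have "E \<inter> (Hs n - ?U) \<in> M" "E - (\<Union>k<Suc n. Hs k) \<in> M"
    using E Hs by (auto intro!: Int Diff)
  then have "\<mu> (E - ?U) = \<mu> (E \<inter> (Hs n - ?U)) + \<mu> (E - (\<Union>k<Suc n. Hs k))"
    unfolding split by (intro ba_additive[OF mu]) (auto simp: lessThan_Suc)
  with Suc.IH show ?case by simp
qed

lemma sums_if_remainder_vanishes:
  fixes Hs :: "nat \<Rightarrow> 'a set"
  assumes "\<mu> \<in> ba M" and "range Hs \<subseteq> M" and "E \<in> M"
    and "(\<lambda>n. \<mu> (E - (\<Union>k<n. Hs k))) \<longlonglongrightarrow> 0"
  shows "(\<lambda>n. \<mu> (E \<inter> (Hs n - (\<Union>k<n. Hs k)))) sums \<mu> E"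
proof -
  have "(\<lambda>n. \<mu> E - \<mu> (E - (\<Union>k<n. Hs k))) \<longlonglongrightarrow> \<mu> E - 0"
    by (intro tendsto_diff tendsto_const assms(4))
  moreover have "\<mu> E - \<mu> (E - (\<Union>k<n. Hs k)) = (\<Sum>k<n. \<mu> (E \<inter> (Hs k - (\<Union>j<k. Hs j))))" for n
    using ba_telescoping[OF assms(1-3), of n] by linarith
  ultimately show ?thesis unfolding sums_def by simp
qed

lemma exhausting_remainder_tv_vanishes:
  fixes Hs :: "nat \<Rightarrow> 'a set"
  assumes mu: "\<mu> \<in> ba M" and "H0 \<subseteq> M" and Hs: "range Hs \<subseteq> M"
    and ex: "exhausting M \<mu> H0 Hs"
    and E: "E \<in> M" and F: "finite F" "F \<subseteq> H0" "E \<subseteq> \<Union>F"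
  shows "(\<lambda>n. tv M \<mu> (E - (\<Union>k<n. Hs k))) \<longlonglongrightarrow> 0"
proof (rule LIMSEQ_I)
  fix \<epsilon> :: real assume "\<epsilon> > 0"
  then obtain N where "\<forall>n\<ge>N. \<forall>F. finite F \<and> F \<subseteq> H0 \<longrightarrow> tv M \<mu> (\<Union>F - (\<Union>k<n. Hs k)) < \<epsilon>"
    using ex unfolding exhausting_def by auto
  then have N: "\<And>n. n \<ge> N \<Longrightarrow> tv M \<mu> (\<Union>F - (\<Union>k<n. Hs k)) < \<epsilon>"
    using F by simp
  have "norm (tv M \<mu> (E - (\<Union>k<n. Hs k))) < \<epsilon>" if "n \<ge> N" for n
  proof -
    have U: "(\<Union>k<n. Hs k) \<in> M" using Hs by (intro finite_UN) auto
    have "\<Union>F \<in> M" using F assms(2) by (intro finite_Union) auto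
    then have "tv M \<mu> (E - (\<Union>k<n. Hs k)) \<le> tv M \<mu> (\<Union>F - (\<Union>k<n. Hs k))"
      using E U F(3) by (intro tv_mono[OF mu]) auto
    moreover have "0 \<le> tv M \<mu> (E - (\<Union>k<n. Hs k))" using E U by (intro tv_nonneg[OF mu]) auto
    ultimately show ?thesis using N[OF that] by simp
  qed
  then show "\<exists>N. \<forall>n\<ge>N. norm (tv M \<mu> (E - (\<Union>k<n. Hs k)) - 0) < \<epsilon>" by auto
qed

lemma outer_tv_eq_0:
  assumes mu: "\<mu> \<in> ba M" and A: "\<And>n. A n \<in> M" "\<And>n. E \<subseteq> A n"
    and lim: "(\<lambda>n. tv M \<mu> (A n)) \<longlonglongrightarrow> 0"
  shows "outer_tv M \<mu> E = 0"
proof -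
  define T where "T = {tv M \<mu> B | B. B \<in> M \<and> E \<subseteq> B}"
  have T: "\<And>n. tv M \<mu> (A n) \<in> T" using A unfolding T_def by blast
  have "bdd_below T" unfolding T_def using tv_nonneg[OF mu] by (auto intro: bdd_belowI[of _ 0])
  then have "Inf T \<le> 0"
    using T by (intro LIMSEQ_le_const[OF lim]) (auto intro: cInf_lower)
  moreover have "0 \<le> Inf T"
    using T[of 0] by (intro cInf_greatest) (auto simp: T_def intro: tv_nonneg[OF mu])
  ultimately show ?thesis unfolding outer_tv_def T_def[symmetric] by simp
qed

lemma exhausting_decomposition_of_covered_set:
  fixes Hs :: "nat \<Rightarrow> 'a set"
  assumes mu: "\<mu> \<in> ba M" and H0: "H0 \<subseteq> M" and Hs: "range Hs \<subseteq> M"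
    and ex: "exhausting M \<mu> H0 Hs"
    and H: "H \<in> M" and F: "finite F" "F \<subseteq> H0" "H \<subseteq> \<Union>F"
  shows "outer_tv M \<mu> (H \<inter> (\<Inter>n. \<Omega> - Hs n)) = 0"
    and "A \<in> M \<Longrightarrow> (\<lambda>n. \<mu> (A \<inter> H \<inter> (Hs n - (\<Union>k<n. Hs k)))) sums \<mu> (A \<inter> H)"
proof -
  have U: "(\<Union>k<n. Hs k) \<in> M" for n using Hs by (intro finite_UN) auto
  show "outer_tv M \<mu> (H \<inter> (\<Inter>n. \<Omega> - Hs n)) = 0"
  proof (rule outer_tv_eq_0[OF mu])
    show "H - (\<Union>k<n. Hs k) \<in> M" "H \<inter> (\<Inter>n. \<Omega> - Hs n) \<subseteq> H - (\<Union>k<n. Hs k)" for n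
      using H U by auto
    show "(\<lambda>n. tv M \<mu> (H - (\<Union>k<n. Hs k))) \<longlonglongrightarrow> 0"
      using exhausting_remainder_tv_vanishes[OF mu H0 Hs ex H] F .
  qed
  assume A: "A \<in> M"
  have AH: "A \<inter> H \<in> M" "A \<inter> H \<subseteq> \<Union>F" using A H F by auto
  have rest: "A \<inter> H - (\<Union>k<n. Hs k) \<in> M" for n using AH(1) U by (rule Diff)
  have "(\<lambda>n. \<mu> (A \<inter> H - (\<Union>k<n. Hs k))) \<longlonglongrightarrow> 0"
  proof (rule Lim_null_comparison)
    show "\<forall>\<^sub>F n in sequentially. norm (\<mu> (A \<inter> H - (\<Union>k<n. Hs k))) \<le> tv M \<mu> (A \<inter> H - (\<Union>k<n. Hs k))"
      using tv_ge_abs[OF mu rest] by (intro always_eventually allI) simp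
    show "(\<lambda>n. tv M \<mu> (A \<inter> H - (\<Union>k<n. Hs k))) \<longlonglongrightarrow> 0"
      using exhausting_remainder_tv_vanishes[OF mu H0 Hs ex AH(1) F(1,2) AH(2)] .
  qed
  then show "(\<lambda>n. \<mu> (A \<inter> H \<inter> (Hs n - (\<Union>k<n. Hs k)))) sums \<mu> (A \<inter> H)"
    by (rule sums_if_remainder_vanishes[OF mu Hs AH(1)])
qed

text \<open>Part (i): for inner regular \<open>\<mu>\<close> the remainder of every set is small, since
  each \<open>H0\<close>-set inside it is a remainder of a single \<open>H0\<close>-set.\<close>
lemma exhausting_decomposition_inner_regular:
  fixes Hs :: "nat \<Rightarrow> 'a set"
  assumes mu: "\<mu> \<in> ba M" and H0: "H0 \<subseteq> M" and Hs: "range Hs \<subseteq> M"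
    and ex: "exhausting M \<mu> H0 Hs" and ir: "inner_regular M H0 \<mu>" and A: "A \<in> M"
  shows "(\<lambda>n. \<mu> (A \<inter> (Hs n - (\<Union>k<n. Hs k)))) sums \<mu> A"
proof (rule sums_if_remainder_vanishes[OF mu Hs A], rule LIMSEQ_I)
  fix r :: real assume "r > 0"
  then obtain N where N: "\<forall>n\<ge>N. \<forall>F. finite F \<and> F \<subseteq> H0 \<longrightarrow> tv M \<mu> (\<Union>F - (\<Union>k<n. Hs k)) < r / 2"
    using ex unfolding exhausting_def by (meson half_gt_zero)
  have "\<bar>\<mu> (A - (\<Union>k<n. Hs k))\<bar> \<le> r / 2" if "n \<ge> N" for n
  proof (rule inner_regular_abs_le[OF mu ir])
    show "A - (\<Union>k<n. Hs k) \<in> M" using A Hs by (intro Diff finite_UN) auto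
    fix H assume H: "H \<in> H0" "H \<subseteq> A - (\<Union>k<n. Hs k)"
    have "tv M \<mu> (\<Union>{H} - (\<Union>k<n. Hs k)) < r / 2" using N that H(1) by blast
    moreover have "\<Union>{H} - (\<Union>k<n. Hs k) = H" using H(2) by auto
    moreover have "H \<in> M" using H(1) H0 by blast
    ultimately show "\<bar>\<mu> H\<bar> \<le> r / 2" using tv_ge_abs[OF mu, of H] by simp
  qed
  with \<open>r > 0\<close> show "\<exists>N. \<forall>n\<ge>N. norm (\<mu> (A - (\<Union>k<n. Hs k)) - 0) < r"
    by (intro exI[of _ N]) force
qed

text \<open>If \<open>H0\<close> contains the union \<open>V\<close> of the sequence, every set splits into its part
  outside \<open>V\<close> and its part inside, and the latter is covered by the single set \<open>V\<close>.\<close>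
lemma exhausting_decomposition_countable_union:
  fixes Hs :: "nat \<Rightarrow> 'a set"
  assumes mu: "\<mu> \<in> ba M" and H0: "H0 \<subseteq> M" and Hs: "range Hs \<subseteq> M"
    and ex: "exhausting M \<mu> H0 Hs" and V: "(\<Union>n. Hs n) \<in> H0" and A: "A \<in> M"
  shows "summable (\<lambda>n. \<mu> (A \<inter> (Hs n - (\<Union>k<n. Hs k))))"
    and "\<mu> A = \<mu> (A \<inter> (\<Inter>n. \<Omega> - Hs n)) + (\<Sum>n. \<mu> (A \<inter> (Hs n - (\<Union>k<n. Hs k))))"
proof -
  let ?V = "\<Union>n. Hs n"
  have VM: "?V \<in> M" using V H0 by blast
  have "(\<lambda>n. \<mu> (A \<inter> ?V \<inter> (Hs n - (\<Union>k<n. Hs k)))) sums \<mu> (A \<inter> ?V)"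
    by (rule exhausting_decomposition_of_covered_set(2)[OF mu H0 Hs ex VM _ _ _ A, of "{?V}"])
      (use V in auto)
  moreover have "A \<inter> ?V \<inter> (Hs n - (\<Union>k<n. Hs k)) = A \<inter> (Hs n - (\<Union>k<n. Hs k))" for n by blast
  ultimately have sums: "(\<lambda>n. \<mu> (A \<inter> (Hs n - (\<Union>k<n. Hs k)))) sums \<mu> (A \<inter> ?V)" by simp
  then show "summable (\<lambda>n. \<mu> (A \<inter> (Hs n - (\<Union>k<n. Hs k))))" by (rule sums_summable)
  have "A \<inter> (\<Inter>n. \<Omega> - Hs n) = A - ?V" using A sets_into_space by blast
  moreover have "\<mu> ((A - ?V) \<union> (A \<inter> ?V)) = \<mu> (A - ?V) + \<mu> (A \<inter> ?V)"
    using A VM by (intro ba_additive[OF mu] Diff Int) auto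
  moreover have "(A - ?V) \<union> (A \<inter> ?V) = A" by blast
  ultimately have "\<mu> A = \<mu> (A \<inter> (\<Inter>n. \<Omega> - Hs n)) + \<mu> (A \<inter> ?V)" by simp
  with sums show "\<mu> A = \<mu> (A \<inter> (\<Inter>n. \<Omega> - Hs n)) + (\<Sum>n. \<mu> (A \<inter> (Hs n - (\<Union>k<n. Hs k))))"
    by (simp add: sums_unique)
qed

end

theorem mainTheorem16:
  fixes \<Omega> :: "'a set" and AA :: "'a set set" and lam :: "'a set \<Rightarrow> real"
    and MM :: "('a set \<Rightarrow> real) set" and H0 :: "'a set set"
  assumes "algebra \<Omega> AA"
    and "lam \<in> ba AA"
    and "MM \<subseteq> ba_ac AA lam"
    and "H0 \<subseteq> AA"
    and "H0 \<noteq> {}"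
  shows "\<exists>Hs :: nat \<Rightarrow> 'a set. (\<forall>n. Hs n \<in> H0) \<and>
    (let Gs = (\<lambda>n. Hs n - (\<Union>k<n. Hs k)); G = (\<Inter>n. \<Omega> - Hs n) in
      (\<forall>\<mu>\<in>MM. \<forall>H\<in>gen_ring \<Omega> H0.
          outer_tv AA \<mu> (H \<inter> G) = 0 \<and>
          (\<forall>A\<in>AA. (\<lambda>n. \<mu> (A \<inter> H \<inter> Gs n)) sums \<mu> (A \<inter> H)))
      \<and> (\<forall>\<mu>\<in>MM. inner_regular AA H0 \<mu> \<longrightarrow>
            (\<forall>A\<in>AA. (\<lambda>n. \<mu> (A \<inter> Gs n)) sums \<mu> A))
      \<and> ((\<forall>F :: nat \<Rightarrow> 'a set. range F \<subseteq> H0 \<longrightarrow> (\<Union>n. F n) \<in> H0) \<longrightarrow>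
            (\<forall>\<mu>\<in>MM. \<forall>A\<in>AA. summable (\<lambda>n. \<mu> (A \<inter> Gs n)) \<and>
                 \<mu> A = \<mu> (A \<inter> G) + (\<Sum>n. \<mu> (A \<inter> Gs n)))))"
proof -
  interpret algebra \<Omega> AA by fact
  obtain Hs :: "nat \<Rightarrow> 'a set" where Hs: "range Hs \<subseteq> H0" and lam: "exhausting AA lam H0 Hs"
    using exhausting_sequence_exists[OF assms(1,2,4,5)] by blast
  have HsAA: "range Hs \<subseteq> AA" using Hs assms(4) by blast
  have mu: "\<mu> \<in> ba AA" and ex: "exhausting AA \<mu> H0 Hs" if "\<mu> \<in> MM" for \<mu>
    using that assms(3) exhausting_abs_cont[OF assms(1,4) HsAA lam] by (auto simp: ba_ac_def)
  have ring: "outer_tv AA \<mu> (H \<inter> (\<Inter>n. \<Omega> - Hs n)) = 0 \<and>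
      (\<forall>A\<in>AA. (\<lambda>n. \<mu> (A \<inter> H \<inter> (Hs n - (\<Union>k<n. Hs k)))) sums \<mu> (A \<inter> H))"
    if \<mu>: "\<mu> \<in> MM" and H: "H \<in> gen_ring \<Omega> H0" for \<mu> H
  proof -
    obtain F where "finite F" "F \<subseteq> H0" "H \<subseteq> \<Union>F"
      using gen_ring_finitely_covered(2)[OF assms(1,4) H] by blast
    with gen_ring_finitely_covered(1)[OF assms(1,4) H] show ?thesis
      using exhausting_decomposition_of_covered_set[OF mu[OF \<mu>] assms(4) HsAA ex[OF \<mu>]]
      by blast
  qed
  show ?thesis
    unfolding Let_def
    using Hs ring mu ex
      exhausting_decomposition_inner_regular[OF _ assms(4) HsAA]
      exhausting_decomposition_countable_union[OF _ assms(4) HsAA]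
    by (intro exI[of _ Hs]) auto
qed

end
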